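(* Let $q$ be a prime power and $M$ an $n\times n$ matrix over $\mathbb{F}_{q^2}$. Then $\sharp(\mathrm{Num}_0(M))=\sharp(\mathrm{Num}_0(M^\dagger))$, and, if $n\ge 2$, $\sharp(\mathrm{Num}'_0(M))=\sharp(\mathrm{Num}'_0(M^\dagger))$.
   Context: The Hermitian form on $\mathbb{F}_{q^2}^n$ is $\langle u,v\rangle=\sum_i u_i^q v_i$. For $N=(n_{ij})$, $N^\dagger=(n_{ji}^q)$. $\mathrm{Num}_0(M)=\{\langle u,Mu\rangle: u\in\mathbb{F}_{q^2}^n,\ \langle u,u\rangle=0\}$ and, for $n\ge 2$, $\mathrm{Num}'_0(M)=\{\langle u,Mu\rangle: u\in\mathbb{F}_{q^2}^n\setminus\{0\},\ \langle u,u\rangle=0\}$. *)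

theory Defs
  imports "HOL-Analysis.Analysis"
begin

text \<open>The field F_{q^2} is modelled as a finite field type 'a with CARD('a) = q^2;
  vectors in F_{q^2}^n are 'a^'n, n x n matrices are 'a^'n^'n.\<close>

definition herm :: "nat \<Rightarrow> 'a::field^'n \<Rightarrow> 'a^'n \<Rightarrow> 'a" where
  "herm q u v = (\<Sum>i\<in>UNIV. (u $ i) ^ q * v $ i)"

definition dagger :: "nat \<Rightarrow> 'a::field^'n^'n \<Rightarrow> 'a^'n^'n" where
  "dagger q N = (\<chi> i j. (N $ j $ i) ^ q)"

definition Num0 :: "nat \<Rightarrow> 'a::field^'n^'n \<Rightarrow> 'a set" where
  "Num0 q M = {herm q u (M *v u) | u. herm q u u = 0}"

definition Num0' :: "nat \<Rightarrow> 'a::field^'n^'n \<Rightarrow> 'a set" where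
  "Num0' q M = {herm q u (M *v u) | u. u \<noteq> 0 \<and> herm q u u = 0}"

end

theory Submission
  imports Defs "HOL-Number_Theory.Number_Theory"
begin

text \<open>The Frobenius map \<open>x \<mapsto> x^q\<close> is additive, since \<open>q\<close> is a power of the characteristic,
  and an involution of the field with \<open>q\<^sup>2\<close> elements. Applying it to \<open>\<langle>u, M u\<rangle>\<close> conjugates every
  coefficient of \<open>M\<close> and swaps the roles of \<open>u\<^sup>q\<close> and \<open>u\<close>, which gives exactly
  \<open>\<langle>u, M\<^sup>\<dagger> u\<rangle>\<close>. Hence the Frobenius map is a bijection from \<open>Num\<^sub>0(M)\<close> onto
  \<open>Num\<^sub>0(M\<^sup>\<dagger>)\<close>, and likewise for \<open>Num'\<^sub>0\<close>.\<close>

lemma power_card_minus_one_eq_one: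
  fixes x :: "'a::{field,finite}"
  assumes "x \<noteq> 0"
  shows "x ^ (CARD('a) - 1) = 1"
proof -
  let ?U = "UNIV - {0::'a}"
  have "x ^ card ?U * (\<Prod>y\<in>?U. y) = (\<Prod>y\<in>?U. x * y)"
    by (simp add: prod.distrib)
  also have "\<dots> = (\<Prod>y\<in>?U. y)"
    using assms by (intro prod.reindex_bij_witness[of _ "\<lambda>y. y / x" "\<lambda>y. x * y"]) auto
  finally have "x ^ card ?U = 1"
    by simp
  then show ?thesis
    by (simp add: card_Diff_singleton)
qed

lemma power_card_eq_self:
  fixes x :: "'a::{field,finite}"
  shows "x ^ CARD('a) = x"
proof (cases "x = 0")
  case False
  have "x ^ CARD('a) = x ^ (CARD('a) - 1) * x"
    using finite_UNIV_card_ge_0[where 'a='a] by (simp flip: power_Suc2)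
  then show ?thesis
    using power_card_minus_one_eq_one[OF False] by simp
qed simp

lemma CHAR_eq_if_card_eq_prime_power:
  assumes "prime p" "m > 0" "CARD('a::{idom,finite}) = p ^ m"
  shows "CHAR('a) = p"
proof -
  have "prime CHAR('a)"
    by (rule prime_CHAR_semidom) (rule finite_imp_CHAR_pos, simp)
  moreover have "CHAR('a) dvd p ^ m"
    using CHAR_dvd_CARD[where 'a='a] assms(3) by simp
  ultimately have "CHAR('a) dvd p"
    using prime_dvd_power by blast
  with \<open>prime CHAR('a)\<close> show ?thesis
    using assms(1) primes_dvd_imp_eq by blast
qed

lemma frobenius_involution:
  fixes x :: "'a::{field,finite}"
  assumes "CARD('a) = q ^ 2"
  shows "(x ^ q) ^ q = x"
  using power_card_eq_self[of x] assms by (simp add: power2_eq_square flip: power_mult)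

lemma herm_dagger_eq_frobenius:
  fixes M :: "'a::field^'n^'n"
  assumes "prime CHAR('a)" "q = CHAR('a) ^ k" and invol: "\<And>x::'a. (x ^ q) ^ q = x"
  shows "herm q u (dagger q M *v u) = herm q u (M *v u) ^ q"
proof -
  have frob_sum: "\<And>(f::'n \<Rightarrow> 'a) A. sum f A ^ q = (\<Sum>i\<in>A. f i ^ q)"
    using freshmans_dream_sum' assms(1,2) by blast
  have "herm q u (M *v u) ^ q = (\<Sum>j\<in>UNIV. (u $ j ^ q * (\<Sum>i\<in>UNIV. M $ j $ i * u $ i)) ^ q)"
    unfolding herm_def matrix_vector_mult_def by (simp add: frob_sum)
  also have "\<dots> = (\<Sum>j\<in>UNIV. \<Sum>i\<in>UNIV. u $ j * (M $ j $ i) ^ q * (u $ i) ^ q)"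
    by (simp add: power_mult_distrib invol frob_sum sum_distrib_left mult.assoc)
  also have "\<dots> = (\<Sum>i\<in>UNIV. \<Sum>j\<in>UNIV. u $ j * (M $ j $ i) ^ q * (u $ i) ^ q)"
    by (rule sum.swap)
  also have "\<dots> = herm q u (dagger q M *v u)"
    unfolding herm_def dagger_def matrix_vector_mult_def by (simp add: sum_distrib_left mult_ac)
  finally show ?thesis
    by simp
qed

lemma Num0_dagger_eq_image:
  fixes M :: "'a::field^'n^'n"
  assumes "prime CHAR('a)" "q = CHAR('a) ^ k" "\<And>x::'a. (x ^ q) ^ q = x"
  shows "Num0 q (dagger q M) = (\<lambda>x. x ^ q) ` Num0 q M"
  unfolding Num0_def by (auto simp: herm_dagger_eq_frobenius[OF assms])

lemma Num0'_dagger_eq_image: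
  fixes M :: "'a::field^'n^'n"
  assumes "prime CHAR('a)" "q = CHAR('a) ^ k" "\<And>x::'a. (x ^ q) ^ q = x"
  shows "Num0' q (dagger q M) = (\<lambda>x. x ^ q) ` Num0' q M"
  unfolding Num0'_def by (auto simp: herm_dagger_eq_frobenius[OF assms])

theorem lemma1:
  fixes q :: nat and M :: "'a::{field,finite}^'n^'n"
  assumes "\<exists>p k. prime p \<and> k > 0 \<and> q = p ^ k"
    and "CARD('a) = q ^ 2"
  shows "card (Num0 q M) = card (Num0 q (dagger q M)) \<and>
         (CARD('n) \<ge> 2 \<longrightarrow> card (Num0' q M) = card (Num0' q (dagger q M)))"
proof -
  obtain p k where "prime p" "k > 0" and q: "q = p ^ k"
    using assms(1) by blast
  have "CARD('a) = p ^ (2 * k)"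
    using assms(2) q by (simp add: power_mult mult.commute)
  then have "CHAR('a) = p"
    using \<open>prime p\<close> \<open>k > 0\<close> by (intro CHAR_eq_if_card_eq_prime_power[of p "2 * k"]) simp_all
  then have char: "prime CHAR('a)" "q = CHAR('a) ^ k"
    using \<open>prime p\<close> q by simp_all
  have invol: "\<And>x::'a. (x ^ q) ^ q = x"
    using frobenius_involution assms(2) by blast
  then have "inj_on (\<lambda>x::'a. x ^ q) A" for A
    by (metis inj_onI)
  then show ?thesis
    by (simp add: Num0_dagger_eq_image[OF char invol] Num0'_dagger_eq_image[OF char invol] card_image)
qed

end
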